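(* Let $M=\frac32-\sqrt2$. For real $f_1,f_2,f_3,y_1,y_2,y_3$ put $$\hat A=(1-f_1)(1-y_1)+(1-f_2)(1-y_2)+2(1-f_3)(1-y_3),\qquad \hat F_1=\frac{(1-f_1)(1-y_1)}{\hat A},$$ $$P_1=\frac{y_1(\frac12-y_1)}{1-y_1}-\frac{4Mf_2}{1-f_1},\quad P_2=(1-f_2)\,y_2(\tfrac12-y_2)+4Mf_1(1-y_2),\quad P_3=2(1-f_3)\,y_3(\tfrac12-y_3)+8M(f_1+f_2)(1-y_3),$$ and $$\hat\alpha(f_1,f_2,f_3,y_1,y_2,y_3)=\frac{1}{(\frac12-\hat F_1)\hat A}\Bigl(\hat A(1-\hat F_1)P_1+P_2+P_3\Bigr).$$ Then for all $f_1,f_2,f_3,y_1,y_2,y_3\in[0,\frac12]$ satisfying $f_1+f_2+2f_3=1$, $6f_1+f_2-1<0$, $4f_1+f_2-\frac34<0$, $\frac1{13}\le f_1\le\frac12$ and $0\le f_2,f_3\le\frac12$, we have $\hat\alpha(f_1,f_2,f_3,y_1,y_2,y_3)\le\frac{9163}{10000}$.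
   Context: In the paper's notation, with $\Phi(x)=\frac{1}{x(\frac12-x)}$, one has $y(\frac12-y)=1/\Phi(y)$ and $\frac{1}{(\frac12-\hat F_1)\hat A}=\frac{\Phi(\hat F_1)\hat F_1}{\hat A}$. Under the hypotheses $0<\hat F_1<\frac12$. *)

theory Defs
  imports Complex_Main
begin

definition M22 :: real where "M22 = 3/2 - sqrt 2"

definition Ahat :: "real \<Rightarrow> real \<Rightarrow> real \<Rightarrow> real \<Rightarrow> real \<Rightarrow> real \<Rightarrow> real" where
  "Ahat f1 f2 f3 y1 y2 y3 = (1-f1)*(1-y1) + (1-f2)*(1-y2) + 2*(1-f3)*(1-y3)"

definition F1hat :: "real \<Rightarrow> real \<Rightarrow> real \<Rightarrow> real \<Rightarrow> real \<Rightarrow> real \<Rightarrow> real" where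
  "F1hat f1 f2 f3 y1 y2 y3 = (1-f1)*(1-y1) / Ahat f1 f2 f3 y1 y2 y3"

definition P1 :: "real \<Rightarrow> real \<Rightarrow> real \<Rightarrow> real" where
  "P1 f1 f2 y1 = y1*(1/2 - y1)/(1-y1) - 4*M22*f2/(1-f1)"

definition P2 :: "real \<Rightarrow> real \<Rightarrow> real \<Rightarrow> real" where
  "P2 f1 f2 y2 = (1-f2)*y2*(1/2 - y2) + 4*M22*f1*(1-y2)"

definition P3 :: "real \<Rightarrow> real \<Rightarrow> real \<Rightarrow> real \<Rightarrow> real" where
  "P3 f1 f2 f3 y3 = 2*(1-f3)*y3*(1/2 - y3) + 8*M22*(f1+f2)*(1-y3)"

definition alphahat :: "real \<Rightarrow> real \<Rightarrow> real \<Rightarrow> real \<Rightarrow> real \<Rightarrow> real \<Rightarrow> real" where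
  "alphahat f1 f2 f3 y1 y2 y3 =
     (let A = Ahat f1 f2 f3 y1 y2 y3; F = F1hat f1 f2 f3 y1 y2 y3 in
      (1 / ((1/2 - F) * A)) * (A*(1-F)*P1 f1 f2 y1 + P2 f1 f2 y2 + P3 f1 f2 f3 y3))"

end

theory Submission
  imports Defs
begin

text \<open>
  With \<open>c = 9163/10000\<close>, the statement reads \<open>2N \<le> c D\<close> for an explicit numerator \<open>N\<close>
  and denominator \<open>D > 0\<close>. In \<open>N - (c/2) D\<close> the variables \<open>y\<^sub>2, y\<^sub>3\<close> occur only in
  terms \<open>(1 - y) b + y (1/2 - y)\<close>, which are maximised over \<open>y\<close> in closed form; this leaves a
  quadratic in \<open>r = P\<^sub>1 + 3/2 - c/2\<close> that only decreases when \<open>f\<^sub>2\<close> grows, so \<open>f\<^sub>2 = 0\<close>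
  is the worst case. After replacing \<open>M = 3/2 - \<surd>2\<close> by the rational bound \<open>0.0858\<close> and
  clearing denominators, what remains is a polynomial inequality in \<open>f\<^sub>1 \<in> [1/13, 1/6]\<close> and
  \<open>y\<^sub>1 \<in> [0, 1/2]\<close>. That polynomial is cubic in \<open>f\<^sub>1\<close>, and its difference from the chord
  over \<open>[1/13, 1/6]\<close> factors as \<open>(f\<^sub>1 - 1/13)(f\<^sub>1 - 1/6) q\<close> with \<open>q \<ge> 0\<close>. The sign of
  \<open>q\<close>, the two endpoint values and the elimination of \<open>f\<^sub>2\<close> are certified by sums of squares.
\<close>

lemma M22_bounds: "0 \<le> M22" "M22 \<le> 858/10000"
proof -
  have "sqrt 2 < 3/2" by (rule real_less_lsqrt) (auto simp: power2_eq_square)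
  then show "0 \<le> M22" unfolding M22_def by simp
  have "14142/10000 \<le> sqrt 2" by (rule real_le_rsqrt) (simp add: power2_eq_square)
  then show "M22 \<le> 858/10000" unfolding M22_def by simp
qed

lemma affine_plus_parabola_le:
  fixes y b :: real
  shows "(1-y)*b + y*(1/2-y) \<le> ((b + 3/2)^2 - 2)/4"
proof -
  have "((b + 3/2)^2 - 2)/4 - ((1-y)*b + y*(1/2-y)) = (y + b/2 - 1/4)^2"
    by (simp add: field_simps power2_eq_square)
  then show ?thesis by (metis diff_ge_0_iff_ge zero_le_power2)
qed

definition final_poly :: "real \<Rightarrow> real \<Rightarrow> real" where
  "final_poly a y =
     (2+a)*(1+a)*(y*(1/2-y) + 20837/20000*(1-y))^2
     + 24*(858/10000)*a*(y*(1/2-y) + 20837/20000*(1-y))*(1-y)*(1+a)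
     + 16*(858/10000)^2*a^2*(5+a)*(1-y)^2
     + (-2*(2+a) + 2*(9163/10000)*(1-a)*(1-y))*(1-y)^2*(1+a)"

definition final_poly_chord_quotient :: "real \<Rightarrow> real \<Rightarrow> real" where
  "final_poly_chord_quotient a y =
     16*(858/10000)^2*(1-y)^2*(a + 1/13 + 1/6)
     + (y*(1/2-y) + 20837/20000*(1-y))^2
     + 24*(858/10000)*(y*(1/2-y) + 20837/20000*(1-y))*(1-y)
     + 80*(858/10000)^2*(1-y)^2 - (2 + 2*(9163/10000)*(1-y))*(1-y)^2"

lemma final_poly_chord:
  "final_poly a y =
     78/7*((1/6-a)*final_poly (1/13) y + (a-1/13)*final_poly (1/6) y)
     + (a-1/13)*(a-1/6)*final_poly_chord_quotient a y"
  unfolding final_poly_def final_poly_chord_quotient_def by algebra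

lemma final_poly_left_nonpos:
  fixes y :: real
  assumes "0 \<le> y" "y \<le> 1/2"
  shows "final_poly (1/13) y \<le> 0"
proof -
  define t where "t = 2*y"
  have y: "y = (1/2)*t" and t: "0 \<le> t" "t \<le> 1" using assms by (simp_all add: t_def)
  have "- final_poly (1/13) y = (1437857067/33800000000)*(1 - 5433361889/958571378*t + 61960544267/11502856536*t^2)^2 + (5231802067937457437/64799425152800000000)*(t - 47343404237684862037/20927208271749829748*t^2)^2 + 3724409257939249103195401061/42440378375108654728944000000*t^4 + (142797/1000000)*(t*(1-t))*(1 - 495661/142797*t)^2 + (5518171877/35699250000)*(t*(1-t))*t^2"
    unfolding final_poly_def y by algebra
  moreover have "0 \<le> \<dots>" using t by (intro add_nonneg_nonneg mult_nonneg_nonneg) auto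
  ultimately show ?thesis by simp
qed

lemma final_poly_right_nonpos:
  fixes y :: real
  assumes "0 \<le> y" "y \<le> 1/2"
  shows "final_poly (1/6) y \<le> 0"
proof -
  define t where "t = 2*y"
  have y: "y = (1/2)*t" and t: "0 \<le> t" "t \<le> 1" using assms by (simp_all add: t_def)
  have "- final_poly (1/6) y = (460895423/4800000000)*(1 - 3970681423/921790846*t + 13434001823/3687163384*t^2)^2 + (757803184090618271/8849192121600000000)*(t - 7394807066639156271/3031212736362473084*t^2)^2 + 12750222316495242519314321/218247317018098062048000000*t^4 + (20517/100000)*(t*(1-t))*(1 - 315331/102585*t)^2 + (796790651/12823125000)*(t*(1-t))*t^2"
    unfolding final_poly_def y by algebra
  moreover have "0 \<le> \<dots>" using t by (intro add_nonneg_nonneg mult_nonneg_nonneg) auto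
  ultimately show ?thesis by simp
qed

lemma final_poly_chord_quotient_nonneg:
  fixes a y :: real
  assumes "1/13 \<le> a" "0 \<le> y" "y \<le> 1/2"
  shows "0 \<le> final_poly_chord_quotient a y"
proof -
  define t where "t = 2*y"
  have y: "y = (1/2)*t" and t: "0 \<le> t" "t \<le> 1" using assms by (simp_all add: t_def)
  have "final_poly_chord_quotient (1/13) y = (9964857/400000000)*(1 - 120605257/19929714*t + 311861657/79718856*t^2)^2 + (80529614709184751/15943771200000000)*(t - 360981885552501151/322118458836739004*t^2)^2 + 166771402110745039054523/1288473835346956016000000*t^4 + (1114313/500000)*(t*(1-t))*(1 - 3165303/2228626*t)^2 + (1023235631803/445725200000)*(t*(1-t))*t^2"
    unfolding final_poly_chord_quotient_def y by algebra
  moreover have "0 \<le> \<dots>" using t by (intro add_nonneg_nonneg mult_nonneg_nonneg) auto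
  moreover have "final_poly_chord_quotient (1/13) y \<le> final_poly_chord_quotient a y"
    unfolding final_poly_chord_quotient_def using assms by (simp add: mult_left_mono)
  ultimately show ?thesis by linarith
qed

lemma final_poly_nonpos:
  fixes a y :: real
  assumes "1/13 \<le> a" "a \<le> 1/6" "0 \<le> y" "y \<le> 1/2"
  shows "final_poly a y \<le> 0"
proof -
  have "(1/6-a)*final_poly (1/13) y \<le> 0" "(a-1/13)*final_poly (1/6) y \<le> 0"
    using assms final_poly_left_nonpos final_poly_right_nonpos
    by (auto intro: mult_nonneg_nonpos)
  then have "78/7*((1/6-a)*final_poly (1/13) y + (a-1/13)*final_poly (1/6) y) \<le> 0"
    by simp
  moreover have "(a-1/13)*(a-1/6)*final_poly_chord_quotient a y \<le> 0"
    using assms final_poly_chord_quotient_nonneg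
    by (intro mult_nonpos_nonneg mult_nonneg_nonpos) auto
  ultimately show ?thesis using final_poly_chord[of a y] by linarith
qed

definition shift_poly :: "real \<Rightarrow> real" where
  "shift_poly a = 3*(20837/20000)*a*(1+a)*(2-5*a)
     - 2*(858/10000)*(-6*a*(1+a)*(2-5*a) + 2*a^2*(1-a)*(1+a)*(2-5*a) + 4*(1-3*a-5*a^2)*(1-a))"

lemma shift_poly_nonneg:
  fixes a :: real
  assumes "1/13 \<le> a" "a \<le> 1/6"
  shows "0 \<le> shift_poly a"
proof -
  define s where "s = (a - 1/13)*(78/7)"
  have a: "a = 1/13 + (1/6-1/13)*s" and s: "0 \<le> s" "s \<le> 1"
    using assms by (simp_all add: s_def field_simps)
  have "shift_poly a = (24030441/285610000)*(1 - 2789285777/320405880*s + 68030156357/4806088200*s^2 - 213817981339/34603835040*s^3)^2 + (9121967381097853439/1220148311824000000)*(s - 369330068504441435291/136829510716467801585*s^2 + 60292389334456207951/36487869524391413756*s^3)^2 + (5189038011187982797209457007/342073776791169503962500000)*(s^2 - 35810281338008358172915582281374795/32012088761708634960957449140616232*s^3)^2 + 144903488966105953264885134046802577644887176637/296232314547903944690849448389265425497248000000*s^6 + (225873/100000)*(s*(1-s))*(1 - 7056107/2258730*s + 4300921/2258730*s^2)^2 + (39215175361001/2258730000000)*(s*(1-s))*(s - 51247114218433/39215175361001*s^2)^2 + (206182720837908336753/39215175361001000000)*(s*(1-s))*s^4"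
    unfolding shift_poly_def a by algebra
  moreover have "0 \<le> \<dots>" using s by (intro add_nonneg_nonneg mult_nonneg_nonneg) auto
  ultimately show ?thesis by simp
qed

definition bound_quadratic :: "real \<Rightarrow> real \<Rightarrow> real \<Rightarrow> real \<Rightarrow> real" where
  "bound_quadratic M a b r =
     (2+a)*r^2 + 8*M*(3*a+2*b)*r + 16*M^2*(a^2/(1-b) + 4*(a+b)^2/(1+a+b))"

text \<open>The constant \<open>20837/20000\<close> is \<open>3/2 - c/2\<close> for the target bound \<open>c = 9163/10000\<close>.\<close>

definition r0 :: "real \<Rightarrow> real" where
  "r0 y = y*(1/2-y)/(1-y) + 20837/20000"

lemma r0_ge:
  fixes y :: real
  assumes "0 \<le> y" "y \<le> 1/2"
  shows "20837/20000 \<le> r0 y"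
  unfolding r0_def using assms by simp

lemma bound_quadratic_at_zero_le:
  fixes a y M :: real
  assumes "1/13 \<le> a" "a \<le> 1/6" "0 \<le> y" "y \<le> 1/2" "0 \<le> M" "M \<le> 858/10000"
  shows "bound_quadratic M a 0 (r0 y) - 2*(2+a) + 2*(9163/10000)*(1-a)*(1-y) \<le> 0"
proof -
  have pos: "0 < 1-y" "0 < 1+a" using assms by auto
  have "0 \<le> r0 y" using r0_ge[OF assms(3,4)] by linarith
  then have "8*M*(3*a)*r0 y \<le> 8*(858/10000)*(3*a)*r0 y"
    using assms by (intro mult_right_mono) auto
  moreover have "M^2 \<le> (858/10000)^2" using assms by (intro power_mono) auto
  then have "16*M^2*(a^2 + 4*a^2/(1+a)) \<le> 16*(858/10000)^2*(a^2 + 4*a^2/(1+a))"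
    using pos by (intro mult_right_mono mult_left_mono) auto
  ultimately have "bound_quadratic M a 0 (r0 y) \<le> bound_quadratic (858/10000) a 0 (r0 y)"
    unfolding bound_quadratic_def by simp
  moreover have "final_poly a y
      = (1-y)^2*(1+a)
        * (bound_quadratic (858/10000) a 0 (r0 y) - 2*(2+a) + 2*(9163/10000)*(1-a)*(1-y))"
  proof -
    have "inverse (1-y)*(1-y) = 1" "inverse (1+a)*(1+a) = 1" using pos by auto
    moreover have "\<And>x. x/(1-y) = x*inverse (1-y)" "\<And>x. x/(1+a) = x*inverse (1+a)"
      by (simp_all add: divide_inverse)
    ultimately show ?thesis
      unfolding bound_quadratic_def r0_def final_poly_def by simp algebra
  qed
  moreover have "final_poly a y \<le> 0" "0 < (1-y)^2*(1+a)"
    using final_poly_nonpos[OF assms(1-4)] pos by auto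
  ultimately show ?thesis by (smt (verit) mult_le_0_iff)
qed

definition shift_coeff :: "real \<Rightarrow> real \<Rightarrow> real" where
  "shift_coeff a b = (2+a)*b/(1-a)^2 - 2*(3*a+2*b)/(1-a) + a^2/(1-b)
     + 4*(2*a+b+a^2+a*b)/((1+a)*(1+a+b))"

lemma bound_quadratic_shift_diff:
  fixes M a b r :: real
  assumes "a \<noteq> 1" "b \<noteq> 1" "1+a \<noteq> 0" "1+a+b \<noteq> 0"
  shows "bound_quadratic M a b (r - 4*M*b/(1-a)) - bound_quadratic M a 0 r
    = 8*M*b*(2*M*shift_coeff a b - 3*a*r/(1-a))"
proof -
  have "inverse (1-a)*(1-a) = 1" "inverse (1+a)*(1+a) = 1" "inverse (1-b)*(1-b) = 1"
    "inverse (1+a+b)*(1+a+b) = 1"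
    using assms by auto
  then show ?thesis
    unfolding bound_quadratic_def shift_coeff_def divide_inverse inverse_mult_distrib
      power_inverse[symmetric]
    by algebra
qed

lemma shift_coeff_le:
  fixes a b :: real
  assumes "1/13 \<le> a" "a \<le> 1/6" "0 \<le> b" "b \<le> 1/2" "6*a+b \<le> 1"
  shows "2*(858/10000)*shift_coeff a b \<le> 3*(20837/20000)*a/(1-a)"
proof -
  have pos: "0 < 1-a" "0 < 1+a" "0 < 1-b" "0 < 1+a+b" "0 < 2-5*a" using assms by auto
  \<comment> \<open>the last summand of \<open>shift_coeff\<close> increases with \<open>b\<close>; \<open>worst\<close> takes \<open>b = 1 - 6a\<close> there\<close>
  define worst where
    "worst = -6*a/(1-a) + 2*a^2 + 4*(1-3*a-5*a^2)/((1+a)*(2-5*a))"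
  have "(2+a)*b/(1-a)^2 - 2*(3*a+2*b)/(1-a) = b*(5*a-2)/(1-a)^2 - 6*a/(1-a)"
  proof -
    have "inverse (1-a)*(1-a) = 1" using pos by simp
    then show ?thesis unfolding divide_inverse power_inverse[symmetric] by algebra
  qed
  moreover have "b*(5*a-2)/(1-a)^2 \<le> 0"
    using assms by (intro divide_nonpos_nonneg mult_nonneg_nonpos) auto
  moreover have "a^2/(1-b) \<le> 2*a^2"
    using assms pos divide_left_mono[of "1/2" "1-b" "a^2"] by simp
  moreover have "4*(1-3*a-5*a^2)/((1+a)*(2-5*a)) - 4*(2*a+b+a^2+a*b)/((1+a)*(1+a+b))
      = 4*(1-6*a-b)/((1+a)*(2-5*a)*(1+a+b))"
  proof -
    have "inverse (1+a)*(1+a) = 1" "inverse (2-5*a)*(2-5*a) = 1" "inverse (1+a+b)*(1+a+b) = 1"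
      using pos by auto
    then show ?thesis unfolding divide_inverse inverse_mult_distrib by algebra
  qed
  moreover have "0 \<le> 4*(1-6*a-b)/((1+a)*(2-5*a)*(1+a+b))" using pos assms by simp
  ultimately have "shift_coeff a b \<le> worst" unfolding shift_coeff_def worst_def by linarith
  moreover have "shift_poly a / ((1-a)*(1+a)*(2-5*a))
      = 3*(20837/20000)*a/(1-a) - 2*(858/10000)*worst"
  proof -
    have "inverse (1-a)*(1-a) = 1" "inverse (1+a)*(1+a) = 1" "inverse (2-5*a)*(2-5*a) = 1"
      using pos by auto
    then show ?thesis
      unfolding shift_poly_def worst_def divide_inverse inverse_mult_distrib by algebra
  qed
  moreover have "0 \<le> shift_poly a / ((1-a)*(1+a)*(2-5*a))"
    using shift_poly_nonneg[OF assms(1,2)] pos by simp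
  ultimately show ?thesis by linarith
qed

lemma bound_quadratic_shift_le:
  fixes M a b r :: real
  assumes "1/13 \<le> a" "a \<le> 1/6" "0 \<le> b" "b \<le> 1/2" "6*a+b \<le> 1"
    and "0 \<le> M" "M \<le> 858/10000" and "20837/20000 \<le> r"
  shows "bound_quadratic M a b (r - 4*M*b/(1-a)) \<le> bound_quadratic M a 0 r"
proof -
  have pos: "0 < 1-a" using assms by simp
  have "2*M*shift_coeff a b \<le> 3*a*r/(1-a)"
  proof (cases "shift_coeff a b \<le> 0")
    case True
    then have "2*M*shift_coeff a b \<le> 0" using assms by (simp add: mult_nonneg_nonpos)
    moreover have "0 \<le> 3*a*r/(1-a)" using assms pos by simp
    ultimately show ?thesis by linarith
  next
    case False
    then have "2*M*shift_coeff a b \<le> 2*(858/10000)*shift_coeff a b"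
      using assms by (intro mult_right_mono) auto
    also have "\<dots> \<le> 3*(20837/20000)*a/(1-a)" using shift_coeff_le assms by blast
    also have "\<dots> \<le> 3*a*r/(1-a)"
      using assms pos by (intro divide_right_mono) auto
    finally show ?thesis .
  qed
  then have "8*M*b*(2*M*shift_coeff a b - 3*a*r/(1-a)) \<le> 0"
    using assms by (intro mult_nonneg_nonpos) auto
  then show ?thesis using bound_quadratic_shift_diff[of a b M r] assms by simp
qed

text \<open>
  \<open>alpha_den\<close> is \<open>2 (1/2 - F\<^sub>1) A\<close>, and \<open>alpha_num\<close> is the numerator of \<open>\<alpha>\<close> with
  \<open>A (1 - F\<^sub>1)\<close> simplified to \<open>A\<^sub>2 + A\<^sub>3\<close>.
\<close>

definition alpha_num :: "real \<Rightarrow> real \<Rightarrow> real \<Rightarrow> real \<Rightarrow> real \<Rightarrow> real \<Rightarrow> real" where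
  "alpha_num f1 f2 f3 y1 y2 y3 =
     ((1-f2)*(1-y2) + 2*(1-f3)*(1-y3))*P1 f1 f2 y1 + P2 f1 f2 y2 + P3 f1 f2 f3 y3"

definition alpha_den :: "real \<Rightarrow> real \<Rightarrow> real \<Rightarrow> real \<Rightarrow> real \<Rightarrow> real \<Rightarrow> real" where
  "alpha_den f1 f2 f3 y1 y2 y3 = (1-f2)*(1-y2) + 2*(1-f3)*(1-y3) - (1-f1)*(1-y1)"

lemma alphahat_eq_ratio:
  assumes "Ahat f1 f2 f3 y1 y2 y3 \<noteq> 0"
  shows "alphahat f1 f2 f3 y1 y2 y3 = 2*alpha_num f1 f2 f3 y1 y2 y3 / alpha_den f1 f2 f3 y1 y2 y3"
proof -
  let ?A = "Ahat f1 f2 f3 y1 y2 y3" and ?F = "F1hat f1 f2 f3 y1 y2 y3"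
  have den: "(1/2 - ?F)*?A = alpha_den f1 f2 f3 y1 y2 y3 / 2"
    using assms unfolding F1hat_def alpha_den_def by (simp add: Ahat_def field_simps)
  have "?A*(1 - ?F) = (1-f2)*(1-y2) + 2*(1-f3)*(1-y3)"
    using assms unfolding F1hat_def by (simp add: Ahat_def field_simps)
  then show ?thesis unfolding alphahat_def alpha_num_def Let_def den by simp
qed

lemma alpha_den_pos:
  fixes f1 f2 f3 y1 y2 y3 :: real
  assumes "f1 + f2 + 2*f3 = 1" "0 < f1" "f1 \<le> 1" "f2 \<le> 1" "f3 \<le> 1"
    and "0 \<le> y1" "y2 \<le> 1/2" "y3 \<le> 1/2"
  shows "0 < alpha_den f1 f2 f3 y1 y2 y3"
proof -
  have "alpha_den f1 f2 f3 y1 y2 y3 = 3/2*f1 + (1-f2)*(1/2-y2) + 2*(1-f3)*(1/2-y3) + (1-f1)*y1"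
    using assms(1) unfolding alpha_den_def by algebra
  moreover have "0 \<le> (1-f2)*(1/2-y2)" "0 \<le> 2*(1-f3)*(1/2-y3)" "0 \<le> (1-f1)*y1"
    using assms by auto
  ultimately show ?thesis using assms(2) by linarith
qed

lemma alpha_num_excess_le:
  fixes f1 f2 f3 y1 y2 y3 :: real
  assumes "f1 + f2 + 2*f3 = 1" "f2 < 1" "f3 < 1"
  shows "4*alpha_num f1 f2 f3 y1 y2 y3
    \<le> 9163/5000*alpha_den f1 f2 f3 y1 y2 y3
       + bound_quadratic M22 f1 f2 (P1 f1 f2 y1 + 20837/20000) - 2*(2+f1)
       + 2*(9163/10000)*(1-f1)*(1-y1)"
proof -
  define r where "r = P1 f1 f2 y1 + 20837/20000"
  define s2 where "s2 = r + 4*M22*f1/(1-f2)"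
  define s3 where "s3 = r + 4*M22*(f1+f2)/(1-f3)"
  have inv: "inverse (1-f2)*(1-f2) = 1" "inverse (1-f3)*(1-f3) = 1"
    "inverse (1+f1+f2)*(1+f1+f2) = 1"
    using assms by auto
  have "4*alpha_num f1 f2 f3 y1 y2 y3
    = 9163/5000*alpha_den f1 f2 f3 y1 y2 y3
      + 4*((1-f2)*((1-y2)*(s2 - 3/2) + y2*(1/2-y2)) + 2*(1-f3)*((1-y3)*(s3 - 3/2) + y3*(1/2-y3)))
      + 2*(9163/10000)*(1-f1)*(1-y1)"
    using inv unfolding alpha_num_def alpha_den_def P2_def P3_def s2_def s3_def r_def
      divide_inverse by algebra
  also have "\<dots> \<le> 9163/5000*alpha_den f1 f2 f3 y1 y2 y3
      + 4*((1-f2)*((s2^2 - 2)/4) + 2*(1-f3)*((s3^2 - 2)/4))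
      + 2*(9163/10000)*(1-f1)*(1-y1)"
    using assms affine_plus_parabola_le[of y2 "s2 - 3/2"] affine_plus_parabola_le[of y3 "s3 - 3/2"]
    by (intro order_refl add_mono mult_left_mono) auto
  also have "\<dots> = 9163/5000*alpha_den f1 f2 f3 y1 y2 y3
      + bound_quadratic M22 f1 f2 r - 2*(2+f1) + 2*(9163/10000)*(1-f1)*(1-y1)"
    using inv assms(1) unfolding bound_quadratic_def s2_def s3_def divide_inverse by algebra
  finally show ?thesis by (simp only: r_def)
qed

theorem lemma22:
  fixes f1 f2 f3 y1 y2 y3 :: real
  assumes "f1 \<in> {0..1/2}" and "f2 \<in> {0..1/2}" and "f3 \<in> {0..1/2}"
    and "y1 \<in> {0..1/2}" and "y2 \<in> {0..1/2}" and "y3 \<in> {0..1/2}"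
    and "f1 + f2 + 2*f3 = 1"
    and "6*f1 + f2 - 1 < 0"
    and "4*f1 + f2 - 3/4 < 0"
    and "1/13 \<le> f1" and "f1 \<le> 1/2"
    and "0 \<le> f2" and "f2 \<le> 1/2" and "0 \<le> f3" and "f3 \<le> 1/2"
  shows "alphahat f1 f2 f3 y1 y2 y3 \<le> 9163/10000"
proof -
  have f1: "1/13 \<le> f1" "f1 \<le> 1/6" and y1: "0 \<le> y1" "y1 \<le> 1/2" using assms by auto
  have den: "0 < alpha_den f1 f2 f3 y1 y2 y3" using assms by (intro alpha_den_pos) auto
  have "Ahat f1 f2 f3 y1 y2 y3 = alpha_den f1 f2 f3 y1 y2 y3 + 2*(1-f1)*(1-y1)"
    unfolding Ahat_def alpha_den_def by simp
  moreover have "0 \<le> 2*(1-f1)*(1-y1)" using f1 y1 by simp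
  ultimately have "Ahat f1 f2 f3 y1 y2 y3 \<noteq> 0" using den by linarith
  have "P1 f1 f2 y1 + 20837/20000 = r0 y1 - 4*M22*f2/(1-f1)" unfolding P1_def r0_def by simp
  moreover have "f2 < 1" "f3 < 1" using assms by auto
  ultimately have "4*alpha_num f1 f2 f3 y1 y2 y3
      \<le> 9163/5000*alpha_den f1 f2 f3 y1 y2 y3
         + bound_quadratic M22 f1 f2 (r0 y1 - 4*M22*f2/(1-f1)) - 2*(2+f1)
         + 2*(9163/10000)*(1-f1)*(1-y1)"
    using alpha_num_excess_le[OF assms(7)] by metis
  moreover have
    "bound_quadratic M22 f1 f2 (r0 y1 - 4*M22*f2/(1-f1)) \<le> bound_quadratic M22 f1 0 (r0 y1)"
    using f1 assms M22_bounds r0_ge[OF y1] by (intro bound_quadratic_shift_le) auto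
  moreover have "bound_quadratic M22 f1 0 (r0 y1) - 2*(2+f1) + 2*(9163/10000)*(1-f1)*(1-y1) \<le> 0"
    using f1 y1 M22_bounds by (intro bound_quadratic_at_zero_le)
  ultimately have "2*alpha_num f1 f2 f3 y1 y2 y3 \<le> 9163/10000*alpha_den f1 f2 f3 y1 y2 y3"
    by linarith
  then show ?thesis
    using alphahat_eq_ratio[OF \<open>Ahat f1 f2 f3 y1 y2 y3 \<noteq> 0\<close>] den
    by (simp add: pos_divide_le_eq)
qed
end
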